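(* Let $n\ge1$, $R>0$, $\gamma\in(0,1)$ and $\beta=\frac{2}{2-\gamma}$. Then there exists $U\in C^2((R,\infty))$, positive on $(R,\infty)$, such that $U$ and $U'$ extend continuously to $r=R$ and $$U''+\Big(\frac{n-1}{r}+\frac r2\Big)U'-\frac\beta2U=\gamma U^{\gamma-1}\ \text{ in }(R,\infty),\qquad U(R)=U'(R)=0.$$ *)

theory Defs
  imports "HOL-Analysis.Analysis"
begin

end

(*
  Let w(r) = r^(n-1) e^(r^2/4).  Then w (U'' + ((n-1)/r + r/2) U') = (w U')', so together with
  U(R) = U'(R) = 0 the equation becomes the fixed-point problem U = P(F(U)) for
  F(v) = beta/2 v + gamma v^(gamma-1) and P f (r) = int_R^r w(s)^(-1) int_R^s w f.

  The exponent beta = 2/(2 - gamma) is the one for which (r-R)^beta is balanced by its own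
  nonlinear term: beta (gamma - 1) = beta - 2.  The singular term v^(gamma-1) is tamed by evaluating
  F at max(U, m) with the barrier m(r) = c1 min(r - R, delta)^beta.  This truncated map is a
  contraction in the norm sup |U| / rho, rho(r) = (r-R)^beta e^(k (r-R)), as soon as k is large.
  Comparing its fixed point with explicit double integrals squeezes it between m and
  c2 (r-R)^beta near R, so the truncation is inactive and U solves the equation.
*)

theory Submission
  imports Defs
begin

lemma has_integral_Icc_iff_Ioc:
  fixes f :: "real \<Rightarrow> 'a::banach"
  shows "(f has_integral y) {a..b} \<longleftrightarrow> (f has_integral y) {a<..b}"
  by (rule has_integral_spike_set_eq; rule negligible_subset[of "{a}"]) auto

lemma integral_Icc_eq_Ioc:
  fixes f :: "real \<Rightarrow> 'a::banach"
  shows "integral {a..b} f = integral {a<..b} f"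
  by (rule integral_spike_set; rule negligible_subset[of "{a}"]) auto

lemma has_integral_powr_shift:
  fixes R s p :: real
  assumes "R \<le> s" "0 < p"
  shows "((\<lambda>t. (t - R) powr (p - 1)) has_integral (s - R) powr p / p) {R..s}"
proof -
  have "((\<lambda>t. (t - R) powr (p - 1)) has_integral (s - R) powr p / p - (R - R) powr p / p) {R..s}"
  proof (rule fundamental_theorem_of_calculus_interior[OF \<open>R \<le> s\<close>])
    show "continuous_on {R..s} (\<lambda>t. (t - R) powr p / p)"
      using \<open>0 < p\<close> by (intro continuous_intros continuous_on_powr') auto
    fix t assume "t \<in> {R<..<s}"
    then have "((\<lambda>t. (t - R) powr p / p) has_real_derivative p * (t - R) powr (p - 1) * 1 / p) (at t)"
      using \<open>0 < p\<close> by (intro derivative_eq_intros DERIV_powr) auto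
    then show "((\<lambda>t. (t - R) powr p / p) has_vector_derivative (t - R) powr (p - 1)) (at t)"
      using \<open>0 < p\<close> by (simp add: has_real_derivative_iff_has_vector_derivative[symmetric])
  qed
  then show ?thesis by simp
qed

lemma has_integral_exp_shift:
  fixes R s k :: real
  assumes "R \<le> s" "k \<noteq> 0"
  shows "((\<lambda>t. exp (k * (t - R))) has_integral (exp (k * (s - R)) - 1) / k) {R..s}"
proof -
  have "((\<lambda>t. exp (k * (t - R))) has_integral exp (k * (s - R)) / k - exp (k * (R - R)) / k) {R..s}"
  proof (rule fundamental_theorem_of_calculus_interior[OF \<open>R \<le> s\<close>])
    show "continuous_on {R..s} (\<lambda>t. exp (k * (t - R)) / k)"
      using \<open>k \<noteq> 0\<close> by (intro continuous_intros) auto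
    fix t
    have "((\<lambda>t. exp (k * (t - R)) / k) has_real_derivative exp (k * (t - R)) * (k * (1 - 0)) / k) (at t)"
      using \<open>k \<noteq> 0\<close> by (intro derivative_eq_intros) auto
    then show "((\<lambda>t. exp (k * (t - R)) / k) has_vector_derivative exp (k * (t - R))) (at t)"
      using \<open>k \<noteq> 0\<close> by (simp add: has_real_derivative_iff_has_vector_derivative[symmetric])
  qed
  then show ?thesis by (simp add: diff_divide_distrib)
qed

lemma tendsto_powr_shift_at_right:
  fixes R p :: real
  assumes "0 < p"
  shows "((\<lambda>s. (s - R) powr p) \<longlongrightarrow> 0) (at_right R)"
proof (rule tendsto_zero_powrI[OF _ tendsto_const _ assms])
  show "((\<lambda>s. s - R) \<longlongrightarrow> 0) (at_right R)"
    using tendsto_diff[OF tendsto_ident_at[of R "{R<..}"] tendsto_const, of R] by simp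
  show "\<forall>\<^sub>F s in at_right R. 0 \<le> s - R"
    using eventually_at_right_less[of R] by eventually_elim simp
qed

lemma powr_lipschitz:
  fixes e \<mu> x y :: real
  assumes "e \<le> 0" "0 < \<mu>" "\<mu> \<le> x" "\<mu> \<le> y"
  shows "\<bar>x powr e - y powr e\<bar> \<le> - e * \<mu> powr (e - 1) * \<bar>x - y\<bar>"
proof -
  have *: "\<bar>b powr e - a powr e\<bar> \<le> - e * \<mu> powr (e - 1) * (b - a)" if "\<mu> \<le> a" "a < b" for a b
  proof -
    have "((\<lambda>z. z powr e) has_real_derivative e * z powr (e - 1)) (at z)" if "a \<le> z" for z
      by (rule has_real_derivative_powr) (use that \<open>\<mu> \<le> a\<close> \<open>0 < \<mu>\<close> in auto)
    then obtain z where z: "a < z" "z < b" and mvt: "b powr e - a powr e = (b - a) * (e * z powr (e - 1))"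
      using MVT2[OF \<open>a < b\<close>, of "\<lambda>z. z powr e" "\<lambda>z. e * z powr (e - 1)"] by blast
    have "z powr (e - 1) \<le> \<mu> powr (e - 1)"
      using z that \<open>0 < \<mu>\<close> \<open>e \<le> 0\<close> by (intro powr_mono2') auto
    then have "e * \<mu> powr (e - 1) \<le> e * z powr (e - 1)"
      using \<open>e \<le> 0\<close> by (rule mult_left_mono_neg)
    then have "e * \<mu> powr (e - 1) * (b - a) \<le> (b - a) * (e * z powr (e - 1))"
      using \<open>a < b\<close> by (simp add: mult.commute mult_right_mono)
    moreover have "(b - a) * (e * z powr (e - 1)) \<le> 0"
      using \<open>e \<le> 0\<close> \<open>a < b\<close> by (simp add: mult_nonneg_nonpos mult_nonpos_nonneg)
    ultimately show ?thesis
      using mvt by linarith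
  qed
  show ?thesis
    using *[of x y] *[of y x] assms by (cases x y rule: linorder_cases) (auto simp: abs_minus_commute)
qed

section \<open>Integral operators for an increasing weight\<close>

locale radial_weight =
  fixes R k \<beta> :: real and w :: "real \<Rightarrow> real"
  assumes k_pos: "0 < k" and \<beta>_gt_1: "1 < \<beta>"
    and w_pos: "R \<le> t \<Longrightarrow> 0 < w t"
    and w_mono: "R \<le> t \<Longrightarrow> t \<le> s \<Longrightarrow> w t \<le> w s"
    and w_cont: "continuous_on {R..} w"
begin

definition \<rho> :: "real \<Rightarrow> real" where
  "\<rho> t = (t - R) powr \<beta> * exp (k * (t - R))"

definition flux :: "(real \<Rightarrow> real) \<Rightarrow> real \<Rightarrow> real" where
  "flux f s = integral {R..s} (\<lambda>t. w t * f t)"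

definition sol :: "(real \<Rightarrow> real) \<Rightarrow> real \<Rightarrow> real" where
  "sol f r = integral {R..r} (\<lambda>s. flux f s / w s)"

text \<open>The term \<open>a / (t - R)^2 * \<rho> t\<close> admits sources as singular as
  \<open>(t - R) powr (\<beta> - 2)\<close> at \<open>R\<close>.\<close>

definition dominated :: "(real \<Rightarrow> real) \<Rightarrow> real \<Rightarrow> real \<Rightarrow> bool" where
  "dominated f a b \<longleftrightarrow> continuous_on {R<..} f \<and> 0 \<le> a \<and> 0 \<le> b \<and>
     (\<forall>t>R. \<bar>f t\<bar> \<le> (a / (t - R)^2 + b) * \<rho> t)"

definition flux_bound :: "real \<Rightarrow> real \<Rightarrow> real \<Rightarrow> real" where
  "flux_bound a b s =
     exp (k * (s - R)) * (a * (s - R) powr (\<beta> - 1) / (\<beta> - 1) + b * (s - R) powr \<beta> / k)"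

lemma \<rho>_pos: "R < t \<Longrightarrow> 0 < \<rho> t"
  by (simp add: \<rho>_def)

lemma \<rho>_nonneg: "0 \<le> \<rho> t"
  by (simp add: \<rho>_def)

lemma continuous_on_\<rho>: "continuous_on {R<..} \<rho>"
proof -
  have "\<forall>t\<in>{R<..}. t - R \<noteq> 0"
    by auto
  then show ?thesis
    unfolding \<rho>_def by (intro continuous_intros) auto
qed

lemma tendsto_exp_shift: "((\<lambda>s. exp (k * (s - R))) \<longlongrightarrow> 1) (at_right R)"
proof -
  have "((\<lambda>s. exp (k * (s - R))) \<longlongrightarrow> exp (k * (R - R))) (at_right R)"
    by (intro tendsto_intros tendsto_ident_at)
  then show ?thesis by simp
qed

lemma tendsto_\<rho>: "(\<rho> \<longlongrightarrow> 0) (at_right R)"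
  unfolding \<rho>_def
  using tendsto_mult[OF tendsto_powr_shift_at_right tendsto_exp_shift] \<beta>_gt_1 by simp

lemma tendsto_flux_bound: "(flux_bound a b \<longlongrightarrow> 0) (at_right R)"
proof -
  have "((\<lambda>s. exp (k * (s - R)) * (a * (s - R) powr (\<beta> - 1) / (\<beta> - 1) + b * (s - R) powr \<beta> / k))
        \<longlongrightarrow> 1 * (a * 0 / (\<beta> - 1) + b * 0 / k)) (at_right R)"
    using \<beta>_gt_1 k_pos by (intro tendsto_intros tendsto_exp_shift tendsto_powr_shift_at_right) auto
  then show ?thesis
    unfolding flux_bound_def[abs_def] by simp
qed

lemma abs_flux_le_integral:
  assumes "R \<le> s" and f: "continuous_on {R<..s} f" and g: "(g has_integral G) {R..s}"
    and f_le: "\<And>t. R < t \<Longrightarrow> t \<le> s \<Longrightarrow> \<bar>f t\<bar> \<le> g t"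
  shows "(\<lambda>t. w t * f t) integrable_on {R..s}" and "\<bar>flux f s\<bar> \<le> w s * G"
proof -
  have g': "((\<lambda>t. w s * g t) has_integral w s * G) {R<..s}"
    using has_integral_mult_right[OF g] by (simp add: has_integral_Icc_iff_Ioc)
  have "continuous_on {R<..s} (\<lambda>t. w t * f t)"
    by (intro continuous_intros f continuous_on_subset[OF w_cont]) auto
  then have meas: "(\<lambda>t. w t * f t) \<in> borel_measurable (lebesgue_on {R<..s})"
    by (rule continuous_imp_measurable_on_sets_lebesgue) auto
  have bound: "\<bar>w t * f t\<bar> \<le> w s * g t" if "t \<in> {R<..s}" for t
  proof -
    have "\<bar>w t * f t\<bar> = w t * \<bar>f t\<bar>"
      using w_pos[of t] that by (simp add: abs_mult)
    also have "\<dots> \<le> w s * \<bar>f t\<bar>"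
      using w_mono[of t s] that by (intro mult_right_mono) auto
    also have "\<dots> \<le> w s * g t"
      using f_le[of t] w_pos[of s] that by (intro mult_left_mono) auto
    finally show ?thesis .
  qed
  have "(\<lambda>t. w t * f t) integrable_on {R<..s}"
    by (rule measurable_bounded_by_integrable_imp_integrable_real[OF meas _ bound])
      (use g' in auto)
  then show "(\<lambda>t. w t * f t) integrable_on {R..s}"
    by (simp add: integrable_on_def has_integral_Icc_iff_Ioc)
  have "norm (integral {R<..s} (\<lambda>t. w t * f t)) \<le> w s * G"
    by (rule integral_norm_bound_integral'[OF _ meas _ g']) (use bound in auto)
  then show "\<bar>flux f s\<bar> \<le> w s * G"
    by (simp add: flux_def integral_Icc_eq_Ioc)
qed

lemma flux_ge_integral:
  assumes f: "(\<lambda>t. w t * f t) integrable_on {R..s}" and g: "(g has_integral G) {R..s}"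
    and g_le: "\<And>t. R < t \<Longrightarrow> t \<le> s \<Longrightarrow> 0 \<le> g t \<and> g t \<le> f t"
  shows "w R * G \<le> flux f s"
proof -
  have g': "((\<lambda>t. w R * g t) has_integral w R * G) {R<..s}"
    using has_integral_mult_right[OF g] by (simp add: has_integral_Icc_iff_Ioc)
  have "w R * G = integral {R<..s} (\<lambda>t. w R * g t)"
    using g' by (rule integral_unique[symmetric])
  also have "\<dots> \<le> integral {R<..s} (\<lambda>t. w t * f t)"
  proof (rule integral_le)
    show "(\<lambda>t. w t * f t) integrable_on {R<..s}"
      using f by (simp add: integrable_on_def has_integral_Icc_iff_Ioc)
    fix t assume "t \<in> {R<..s}"
    then show "w R * g t \<le> w t * f t"
      using g_le[of t] w_pos[of R] w_mono[of R t] by (intro mult_mono) auto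
  qed (use g' in blast)
  also have "\<dots> = flux f s"
    by (simp add: flux_def integral_Icc_eq_Ioc)
  finally show ?thesis .
qed

lemma has_integral_source_profile:
  assumes "R \<le> s"
  shows "((\<lambda>t. A + C * (t - R) powr (\<beta> - 2))
           has_integral A * (s - R) + C * (s - R) powr (\<beta> - 1) / (\<beta> - 1)) {R..s}"
proof -
  have "((\<lambda>t. (t - R) powr (\<beta> - 2)) has_integral (s - R) powr (\<beta> - 1) / (\<beta> - 1)) {R..s}"
    using has_integral_powr_shift[OF assms, of "\<beta> - 1"] \<beta>_gt_1 by (simp add: algebra_simps)
  from has_integral_add[OF has_integral_const_real has_integral_mult_right[OF this]]
  show ?thesis
    using assms by (simp add: mult.commute)
qed

lemma has_integral_flux_profile:
  assumes "R \<le> r"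
  shows "((\<lambda>s. A * (s - R) + C * (s - R) powr (\<beta> - 1) / (\<beta> - 1))
           has_integral A * (r - R)^2 / 2 + C * (r - R) powr \<beta> / (\<beta> * (\<beta> - 1))) {R..r}"
proof -
  have "((\<lambda>s. (s - R) powr 1) has_integral (r - R)^2 / 2) {R..r}"
    using has_integral_powr_shift[OF assms, of 2] assms by (simp add: powr_numeral)
  then have lin: "((\<lambda>s. s - R) has_integral (r - R)^2 / 2) {R..r}"
    by (rule has_integral_eq[rotated]) simp
  have "((\<lambda>s. (s - R) powr (\<beta> - 1) / (\<beta> - 1)) has_integral (r - R) powr \<beta> / \<beta> / (\<beta> - 1)) {R..r}"
    using has_integral_powr_shift[OF assms, of \<beta>] \<beta>_gt_1 by (intro has_integral_divide) auto
  from has_integral_add[OF has_integral_mult_right[OF lin] has_integral_mult_right[OF this]]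
  show ?thesis
    by (simp add: mult.assoc)
qed

context
  fixes f :: "real \<Rightarrow> real" and a b :: real
  assumes dom: "dominated f a b"
begin

lemma dominatedD:
  "continuous_on {R<..} f" "0 \<le> a" "0 \<le> b" "R < t \<Longrightarrow> \<bar>f t\<bar> \<le> (a / (t - R)^2 + b) * \<rho> t"
  using dom by (auto simp: dominated_def)

lemma abs_le_flux_majorant:
  assumes "R < t" "t \<le> s"
  shows "\<bar>f t\<bar> \<le> exp (k * (s - R)) * a * (t - R) powr (\<beta> - 2) + b * (s - R) powr \<beta> * exp (k * (t - R))"
proof -
  have "(a / (t - R)^2 + b) * \<rho> t
      = a * (t - R) powr (\<beta> - 2) * exp (k * (t - R)) + b * (t - R) powr \<beta> * exp (k * (t - R))"
    using assms by (simp add: \<rho>_def powr_diff field_simps)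
  moreover have "exp (k * (t - R)) \<le> exp (k * (s - R))"
    using assms k_pos by simp
  then have "a * (t - R) powr (\<beta> - 2) * exp (k * (t - R)) \<le> exp (k * (s - R)) * a * (t - R) powr (\<beta> - 2)"
    using dominatedD(2) by (simp add: mult_ac mult_left_mono mult_right_mono)
  moreover have "b * (t - R) powr \<beta> * exp (k * (t - R)) \<le> b * (s - R) powr \<beta> * exp (k * (t - R))"
    using assms \<beta>_gt_1 dominatedD(3) by (intro mult_right_mono mult_left_mono powr_mono2) auto
  ultimately show ?thesis
    using dominatedD(4)[OF assms(1)] by linarith
qed

lemma flux_integrable_and_bound:
  assumes "R \<le> s"
  shows "(\<lambda>t. w t * f t) integrable_on {R..s}" and "\<bar>flux f s\<bar> \<le> w s * flux_bound a b s"
proof -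
  define g where
    "g t = exp (k * (s - R)) * a * (t - R) powr (\<beta> - 2) + b * (s - R) powr \<beta> * exp (k * (t - R))" for t
  define G where "G = exp (k * (s - R)) * a * ((s - R) powr (\<beta> - 1) / (\<beta> - 1))
                      + b * (s - R) powr \<beta> * ((exp (k * (s - R)) - 1) / k)"
  have g: "(g has_integral G) {R..s}"
    unfolding g_def G_def using k_pos
    by (intro has_integral_add has_integral_mult_right has_integral_exp_shift assms
        has_integral_source_profile[OF assms, of 0 1, simplified]) auto
  have f_le: "\<bar>f t\<bar> \<le> g t" if "R < t" "t \<le> s" for t
    unfolding g_def by (rule abs_le_flux_majorant[OF that])
  have cont: "continuous_on {R<..s} f"
    using dominatedD(1) by (rule continuous_on_subset) auto
  show "(\<lambda>t. w t * f t) integrable_on {R..s}"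
    by (rule abs_flux_le_integral(1)[OF assms cont g f_le])
  have "G \<le> flux_bound a b s"
    unfolding G_def flux_bound_def using k_pos dominatedD(3)
    by (simp add: algebra_simps divide_right_mono mult_left_mono)
  then show "\<bar>flux f s\<bar> \<le> w s * flux_bound a b s"
    using abs_flux_le_integral(2)[OF assms cont g f_le] w_pos[OF assms]
    by (meson mult_left_mono order.trans less_imp_le)
qed

lemma continuous_on_flux: "continuous_on {R..r} (flux f)"
proof (cases "R \<le> r")
  case True
  show ?thesis
    unfolding flux_def[abs_def]
    by (rule indefinite_integral_continuous_1[OF flux_integrable_and_bound(1)[OF True]])
qed auto

lemma continuous_on_flux_div: "continuous_on {R..r} (\<lambda>s. flux f s / w s)"
  using w_pos by (intro continuous_intros continuous_on_flux continuous_on_subset[OF w_cont])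
    (auto simp: less_imp_neq[symmetric])

lemma has_real_derivative_flux:
  assumes "R < s"
  shows "(flux f has_real_derivative w s * f s) (at s)"
proof -
  define c where "c = (R + s) / 2"
  have c: "R < c" "c < s"
    using assms by (auto simp: c_def)
  have cont: "continuous_on {c..s + 1} (\<lambda>t. w t * f t)"
    using c by (intro continuous_intros continuous_on_subset[OF w_cont]
        continuous_on_subset[OF dominatedD(1)]) auto
  have "((\<lambda>x. integral {c..x} (\<lambda>t. w t * f t)) has_real_derivative w s * f s) (at s within {c..s + 1})"
    by (rule integral_has_real_derivative[OF cont]) (use c in auto)
  moreover have "at s within {c..s + 1} = at s"
    by (rule at_within_interior) (use c in auto)
  ultimately have "((\<lambda>x. flux f c + integral {c..x} (\<lambda>t. w t * f t)) has_real_derivative w s * f s) (at s)"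
    using DERIV_add[OF DERIV_const] by fastforce
  then show ?thesis
  proof (rule has_field_derivative_transform_within_open[where S = "{c<..}"])
    fix x assume "x \<in> {c<..}"
    then show "flux f c + integral {c..x} (\<lambda>t. w t * f t) = flux f x"
      unfolding flux_def using c flux_integrable_and_bound(1)[of x]
      by (simp add: Henstock_Kurzweil_Integration.integral_combine)
  qed (use c in auto)
qed

lemma has_real_derivative_sol:
  assumes "R < r"
  shows "(sol f has_real_derivative flux f r / w r) (at r)"
proof -
  have "(sol f has_real_derivative flux f r / w r) (at r within {R..r + 1})"
    unfolding sol_def[abs_def]
    by (rule integral_has_real_derivative[OF continuous_on_flux_div]) (use assms in auto)
  moreover have "at r within {R..r + 1} = at r"
    by (rule at_within_interior) (use assms in auto)
  ultimately show ?thesis by simp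
qed

lemma continuous_on_sol: "continuous_on {R<..} (sol f)"
  by (rule continuous_at_imp_continuous_on) (auto intro: DERIV_isCont has_real_derivative_sol)

lemma abs_sol_le:
  assumes "R \<le> r"
  shows "\<bar>sol f r\<bar> \<le> (a / (\<beta> * (\<beta> - 1)) + b / k^2) * \<rho> r"
proof -
  define h where "h s = exp (k * (r - R)) * a / (\<beta> - 1) * (s - R) powr (\<beta> - 1)
                        + b * (r - R) powr \<beta> / k * exp (k * (s - R))" for s
  define H where "H = exp (k * (r - R)) * a / (\<beta> - 1) * ((r - R) powr \<beta> / \<beta>)
                      + b * (r - R) powr \<beta> / k * ((exp (k * (r - R)) - 1) / k)"
  have h: "(h has_integral H) {R..r}"
    unfolding h_def H_def using \<beta>_gt_1 k_pos
    by (intro has_integral_add has_integral_mult_right has_integral_exp_shift[OF assms]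
        has_integral_powr_shift[OF assms, of \<beta>, simplified]) auto
  have bound: "\<bar>flux f s / w s\<bar> \<le> h s" if "s \<in> {R..r}" for s
  proof -
    have "\<bar>flux f s / w s\<bar> \<le> flux_bound a b s"
      using flux_integrable_and_bound(2)[of s] w_pos[of s] that
      by (simp add: abs_divide divide_le_eq mult.commute)
    also have "\<dots> \<le> h s"
    proof -
      have "exp (k * (s - R)) \<le> exp (k * (r - R))"
        using that k_pos by simp
      moreover have "(s - R) powr \<beta> \<le> (r - R) powr \<beta>"
        using that \<beta>_gt_1 by (intro powr_mono2) auto
      ultimately show ?thesis
        unfolding flux_bound_def h_def using dominatedD(2,3) \<beta>_gt_1 k_pos
        by (simp add: algebra_simps add_mono mult_left_mono mult_right_mono divide_right_mono)
    qed
    finally show ?thesis .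
  qed
  have "\<bar>sol f r\<bar> \<le> H"
    unfolding sol_def
    using integral_norm_bound_integral[OF integrable_continuous_interval[OF continuous_on_flux_div]
        has_integral_integrable[OF h]] bound h by (simp add: integral_unique)
  also have "H \<le> (a / (\<beta> * (\<beta> - 1)) + b / k^2) * \<rho> r"
  proof -
    have "b * (r - R) powr \<beta> / k * ((exp (k * (r - R)) - 1) / k)
        \<le> b * (r - R) powr \<beta> / k * (exp (k * (r - R)) / k)"
      using dominatedD(3) k_pos by (intro mult_left_mono divide_right_mono) auto
    then show ?thesis
      unfolding H_def \<rho>_def by (simp add: algebra_simps power2_eq_square)
  qed
  finally show ?thesis .
qed

end

lemma sol_diff:
  assumes "dominated f a b" "dominated g a' b'" "R \<le> r"
  shows "sol (\<lambda>t. f t - g t) r = sol f r - sol g r"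
proof -
  have "flux (\<lambda>t. f t - g t) s = flux f s - flux g s" if "R \<le> s" for s
    unfolding flux_def right_diff_distrib
    using flux_integrable_and_bound(1)[OF assms(1) that] flux_integrable_and_bound(1)[OF assms(2) that]
    by (rule integral_diff)
  then have "sol (\<lambda>t. f t - g t) r = integral {R..r} (\<lambda>s. flux f s / w s - flux g s / w s)"
    unfolding sol_def by (intro integral_cong) (auto simp: diff_divide_distrib)
  also have "\<dots> = sol f r - sol g r"
    unfolding sol_def
    using assms(1,2) by (intro integral_diff integrable_continuous_interval continuous_on_flux_div)
  finally show ?thesis .
qed

lemma sol_le_of_source_le:
  assumes "dominated f a b" "R \<le> r"
    and f_le: "\<And>t. R < t \<Longrightarrow> t \<le> r \<Longrightarrow> \<bar>f t\<bar> \<le> A + C * (t - R) powr (\<beta> - 2)"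
  shows "sol f r \<le> A * (r - R)^2 / 2 + C * (r - R) powr \<beta> / (\<beta> * (\<beta> - 1))"
proof -
  have flux_le: "flux f s / w s \<le> A * (s - R) + C * (s - R) powr (\<beta> - 1) / (\<beta> - 1)"
    if "s \<in> {R..r}" for s
  proof -
    have "\<bar>flux f s\<bar> \<le> w s * (A * (s - R) + C * (s - R) powr (\<beta> - 1) / (\<beta> - 1))"
      using that f_le dominatedD(1)[OF assms(1)]
      by (intro abs_flux_le_integral(2)[where g = "\<lambda>t. A + C * (t - R) powr (\<beta> - 2)"]
          has_integral_source_profile) (auto intro: continuous_on_subset)
    then show ?thesis
      using w_pos[of s] that by (simp add: divide_le_eq mult.commute)
  qed
  show ?thesis
    unfolding sol_def
    by (rule has_integral_le[OF integrable_integral has_integral_flux_profile[OF assms(2)] flux_le])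
      (auto intro: integrable_continuous_interval continuous_on_flux_div[OF assms(1)])
qed

lemma sol_ge_of_source_ge:
  assumes "dominated f a b" "R \<le> r" "0 \<le> C"
    and f_ge: "\<And>t. R < t \<Longrightarrow> t \<le> r \<Longrightarrow> C * (t - R) powr (\<beta> - 2) \<le> f t"
  shows "w R / w r * (C * (r - R) powr \<beta> / (\<beta> * (\<beta> - 1))) \<le> sol f r"
proof -
  define P where "P s = C * (s - R) powr (\<beta> - 1) / (\<beta> - 1)" for s
  have flux_ge: "w R / w r * P s \<le> flux f s / w s" if "s \<in> {R..r}" for s
  proof -
    have "0 < w R" "0 < w s" "w s \<le> w r" "0 \<le> P s"
      using that w_pos w_mono[of s r] \<open>0 \<le> C\<close> \<beta>_gt_1 by (auto simp: P_def)
    then have "w R / w r * P s \<le> w R * P s / w s"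
      by (simp add: divide_left_mono)
    also have "\<dots> \<le> flux f s / w s"
      unfolding P_def using that f_ge \<open>0 \<le> C\<close> \<open>0 < w s\<close>
      by (intro divide_right_mono flux_integrable_and_bound(1)[OF assms(1)]
          flux_ge_integral[OF _ has_integral_source_profile[of s 0 C, simplified]]) auto
    finally show ?thesis .
  qed
  have "((\<lambda>s. w R / w r * P s) has_integral w R / w r * (C * (r - R) powr \<beta> / (\<beta> * (\<beta> - 1)))) {R..r}"
    using has_integral_mult_right[OF has_integral_flux_profile[OF assms(2), of 0 C], of "w R / w r"]
    by (simp add: P_def)
  then show ?thesis
    unfolding sol_def
    by (rule has_integral_le[OF _ integrable_integral flux_ge])
      (auto intro: integrable_continuous_interval continuous_on_flux_div[OF assms(1)])
qed

end

section \<open>The truncated fixed-point problem\<close>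

text \<open>Integrating factor of the radial operator:
  \<open>(w u')' = w (u'' + ((n - 1) / r + r / 2) u')\<close> for \<open>w = gauss_weight n\<close>.\<close>

definition gauss_weight :: "nat \<Rightarrow> real \<Rightarrow> real" where
  "gauss_weight n t = t ^ (n - 1) * exp (t^2 / 4)"

lemma gauss_weight_pos: "0 < t \<Longrightarrow> 0 < gauss_weight n t"
  by (simp add: gauss_weight_def)

lemma gauss_weight_mono: "0 \<le> t \<Longrightarrow> t \<le> s \<Longrightarrow> gauss_weight n t \<le> gauss_weight n s"
  unfolding gauss_weight_def by (intro mult_mono power_mono) (auto simp: power_mono)

lemma continuous_on_gauss_weight: "continuous_on S (gauss_weight n)"
  unfolding gauss_weight_def by (intro continuous_intros) auto

lemma has_real_derivative_gauss_weight:
  assumes "1 \<le> n" "0 < t"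
  shows "(gauss_weight n has_real_derivative gauss_weight n t * ((real n - 1) / t + t / 2)) (at t)"
proof -
  have "real (n - 1) * t ^ (n - 1 - 1) = t ^ (n - 1) * ((real n - 1) / t)"
  proof (cases "n - 1")
    case (Suc j)
    then have "real n = real j + 2"
      using assms(1) by linarith
    then show ?thesis
      using Suc assms(2) by (simp add: field_simps)
  qed (use assms in simp)
  moreover have "(gauss_weight n has_real_derivative
      real (n - 1) * t ^ (n - 1 - 1) * exp (t^2 / 4) + t ^ (n - 1) * (exp (t^2 / 4) * (2 * t / 4))) (at t)"
    unfolding gauss_weight_def[abs_def]
    by (auto intro!: derivative_eq_intros simp: power2_eq_square)
  ultimately show ?thesis
    by (simp add: gauss_weight_def algebra_simps)
qed

locale profile_data =
  fixes n :: nat and R \<gamma> \<beta> k c1 \<delta> :: real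
  assumes n_ge_1: "1 \<le> n" and R_pos: "0 < R" and \<gamma>_pos: "0 < \<gamma>" and \<gamma>_lt_1: "\<gamma> < 1"
    and \<beta>_def: "\<beta> = 2 / (2 - \<gamma>)" and k_pos: "0 < k" and c1_pos: "0 < c1" and \<delta>_pos: "0 < \<delta>"
    and \<delta>_small: "\<beta> * \<delta>^2 / 4 < 1"
begin

abbreviation w :: "real \<Rightarrow> real" where
  "w \<equiv> gauss_weight n"

lemma \<beta>_lt_2: "\<beta> < 2"
  using \<gamma>_pos \<gamma>_lt_1 by (auto simp: \<beta>_def field_simps)

lemma \<beta>_\<gamma>_minus_1: "\<beta> * (\<gamma> - 1) = \<beta> - 2" and \<beta>_\<gamma>_minus_2: "\<beta> * (\<gamma> - 2) = -2"
  using \<gamma>_pos \<gamma>_lt_1 by (auto simp: \<beta>_def field_simps)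

sublocale radial_weight R k \<beta> w
proof
  show "0 < k"
    by (fact k_pos)
  show "1 < \<beta>"
    using \<gamma>_pos \<gamma>_lt_1 by (auto simp: \<beta>_def field_simps)
  show "0 < w t" if "R \<le> t" for t
    using that R_pos by (intro gauss_weight_pos) simp
  show "w t \<le> w s" if "R \<le> t" "t \<le> s" for t s
    using that R_pos by (intro gauss_weight_mono) auto
qed (rule continuous_on_gauss_weight)

definition E :: real where "E = \<gamma> / (\<beta> * (\<beta> - 1))"
definition D :: real where "D = 1 - \<beta> * \<delta>^2 / 4"
definition c2 :: real where "c2 = E * c1 powr (\<gamma> - 1) / D"
definition lip :: real where "lip = \<gamma> * (1 - \<gamma>) * c1 powr (\<gamma> - 2)"
definition \<theta> :: real where "\<theta> = lip / (\<beta> * (\<beta> - 1)) + (\<beta> / 2 + lip / \<delta>^2) / k^2"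

definition barrier :: "real \<Rightarrow> real" where
  "barrier t = c1 * min (t - R) \<delta> powr \<beta>"

definition nonlin :: "real \<Rightarrow> real" where
  "nonlin v = \<beta> / 2 * v + \<gamma> * v powr (\<gamma> - 1)"

text \<open>A bounded continuous \<open>V\<close> on the real line encodes \<open>U t = \<rho> t * V (ln (t - R))\<close>
  on \<open>{R<..}\<close>; the sup norm of \<open>V\<close> is the \<open>\<rho>\<close>-weighted sup norm of \<open>U\<close>.\<close>

definition profile :: "(real \<Rightarrow>\<^sub>C real) \<Rightarrow> real \<Rightarrow> real" where
  "profile V t = \<rho> t * apply_bcontfun V (ln (t - R))"

definition rhs :: "(real \<Rightarrow>\<^sub>C real) \<Rightarrow> real \<Rightarrow> real" where
  "rhs V t = nonlin (max (profile V t) (barrier t))"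

definition T :: "(real \<Rightarrow>\<^sub>C real) \<Rightarrow> (real \<Rightarrow>\<^sub>C real)" where
  "T V = Bcontfun (\<lambda>x. sol (rhs V) (R + exp x) / \<rho> (R + exp x))"

lemma lip_pos: "0 < lip"
  using \<gamma>_pos \<gamma>_lt_1 c1_pos by (simp add: lip_def)

lemma D_pos: "0 < D"
  using \<delta>_small by (simp add: D_def)

lemma E_pos: "0 < E"
  using \<gamma>_pos \<beta>_gt_1 by (simp add: E_def)

lemma c2_pos: "0 < c2"
  using E_pos D_pos c1_pos by (simp add: c2_def)

lemma barrier_pos: "R < t \<Longrightarrow> 0 < barrier t"
  using c1_pos \<delta>_pos by (simp add: barrier_def)

lemma barrier_le: "R < t \<Longrightarrow> barrier t \<le> c1 * \<delta> powr \<beta>"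
  using c1_pos \<delta>_pos \<beta>_gt_1 by (auto simp: barrier_def intro!: powr_mono2)

lemma barrier_near: "t - R \<le> \<delta> \<Longrightarrow> barrier t = c1 * (t - R) powr \<beta>"
  by (simp add: barrier_def)

lemma barrier_far: "\<delta> \<le> t - R \<Longrightarrow> barrier t = c1 * \<delta> powr \<beta>"
  by (simp add: barrier_def)

lemma barrier_mono: "R < t \<Longrightarrow> t \<le> r \<Longrightarrow> barrier t \<le> barrier r"
  using c1_pos \<delta>_pos \<beta>_gt_1 by (auto simp: barrier_def intro!: powr_mono2 mult_left_mono)

lemma continuous_on_barrier: "continuous_on {R<..} barrier"
proof -
  have "\<forall>t\<in>{R<..}. min (t - R) \<delta> \<noteq> 0"
    using \<delta>_pos by auto
  then show ?thesis
    unfolding barrier_def by (intro continuous_intros) auto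
qed

lemma barrier_powr_\<gamma>_minus_1:
  "R < t \<Longrightarrow> barrier t powr (\<gamma> - 1) = c1 powr (\<gamma> - 1) * min (t - R) \<delta> powr (\<beta> - 2)"
  using c1_pos \<delta>_pos by (simp add: barrier_def powr_mult powr_powr \<beta>_\<gamma>_minus_1)

lemma barrier_powr_\<gamma>_minus_2:
  assumes "R < t"
  shows "barrier t powr (\<gamma> - 2) = c1 powr (\<gamma> - 2) / (min (t - R) \<delta>)^2"
proof -
  have "barrier t powr (\<gamma> - 2) = c1 powr (\<gamma> - 2) * min (t - R) \<delta> powr (-2)"
    using c1_pos \<delta>_pos assms by (simp add: barrier_def powr_mult powr_powr \<beta>_\<gamma>_minus_2)
  also have "min (t - R) \<delta> powr (-2) = 1 / (min (t - R) \<delta>)^2"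
    using \<delta>_pos assms by (simp add: powr_minus divide_inverse)
  finally show ?thesis
    by simp
qed

lemma nonlin_pos: "0 < v \<Longrightarrow> 0 < nonlin v"
  unfolding nonlin_def using \<beta>_gt_1 \<gamma>_pos by (intro add_pos_pos mult_pos_pos) auto

lemma nonlin_lipschitz:
  assumes "0 < \<mu>" "\<mu> \<le> x" "\<mu> \<le> y"
  shows "\<bar>nonlin x - nonlin y\<bar> \<le> (\<beta> / 2 + \<gamma> * (1 - \<gamma>) * \<mu> powr (\<gamma> - 2)) * \<bar>x - y\<bar>"
proof -
  have "nonlin x - nonlin y = \<beta> / 2 * (x - y) + \<gamma> * (x powr (\<gamma> - 1) - y powr (\<gamma> - 1))"
    by (simp add: nonlin_def field_simps)
  then have "\<bar>nonlin x - nonlin y\<bar> \<le> \<beta> / 2 * \<bar>x - y\<bar> + \<gamma> * \<bar>x powr (\<gamma> - 1) - y powr (\<gamma> - 1)\<bar>"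
    using \<beta>_gt_1 \<gamma>_pos
      abs_triangle_ineq[of "\<beta> / 2 * (x - y)" "\<gamma> * (x powr (\<gamma> - 1) - y powr (\<gamma> - 1))"]
    by (simp add: abs_mult)
  also have "\<dots> \<le> \<beta> / 2 * \<bar>x - y\<bar> + \<gamma> * ((1 - \<gamma>) * \<mu> powr (\<gamma> - 2) * \<bar>x - y\<bar>)"
    using powr_lipschitz[of "\<gamma> - 1", OF _ assms] \<gamma>_pos \<gamma>_lt_1
    by (intro add_left_mono mult_left_mono) auto
  finally show ?thesis
    by (simp add: algebra_simps)
qed

lemma powr_\<beta>_minus_2_le_\<rho>: "R < t \<Longrightarrow> (t - R) powr (\<beta> - 2) \<le> \<rho> t / (t - R)^2"
  using k_pos by (simp add: \<rho>_def powr_diff divide_right_mono)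

lemma one_le_\<rho>:
  assumes "R < t"
  shows "1 \<le> (1 / (t - R)^2 + 1) * \<rho> t"
proof (cases "t - R \<le> 1")
  case True
  have "0 \<le> (\<beta> - 2) * ln (t - R)"
    using True assms \<beta>_lt_2 by (intro mult_nonpos_nonpos) auto
  then have "1 \<le> (t - R) powr (\<beta> - 2)"
    using assms by (simp add: powr_def)
  also have "\<dots> \<le> \<rho> t / (t - R)^2"
    using powr_\<beta>_minus_2_le_\<rho>[OF assms] .
  finally show ?thesis
    using \<rho>_nonneg[of t] by (simp add: distrib_right)
next
  case False
  have "1 \<le> (t - R) powr \<beta>"
    using False \<beta>_gt_1 by (intro ge_one_powr_ge_zero) auto
  also have "\<dots> \<le> (t - R) powr \<beta> * exp (k * (t - R))"
    using mult_left_mono[of 1 "exp (k * (t - R))" "(t - R) powr \<beta>"] k_pos assms by simp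
  also have "\<dots> = \<rho> t"
    by (simp add: \<rho>_def)
  finally show ?thesis
    using \<rho>_nonneg[of t] assms by (simp add: distrib_right add_increasing)
qed

lemma abs_profile_le: "R < t \<Longrightarrow> \<bar>profile V t\<bar> \<le> \<rho> t * norm V"
  using norm_bounded[of V "ln (t - R)"] \<rho>_pos[of t]
  by (simp add: profile_def abs_mult mult_left_mono)

lemma abs_profile_diff_le: "R < t \<Longrightarrow> \<bar>profile V t - profile W t\<bar> \<le> \<rho> t * dist V W"
  using dist_bounded[of V "ln (t - R)" W] \<rho>_pos[of t]
  by (simp add: profile_def dist_real_def abs_mult mult_left_mono flip: right_diff_distrib)

lemma continuous_on_profile: "continuous_on {R<..} (profile V)"
proof -
  have "continuous_on {R<..} (\<lambda>t. apply_bcontfun V (ln (t - R)))"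
    by (rule continuous_on_compose2[OF continuous_on_apply_bcontfun[of UNIV V]])
      (auto intro!: continuous_intros)
  then show ?thesis
    unfolding profile_def[abs_def] by (intro continuous_intros continuous_on_\<rho>)
qed

lemma rhs_pos: "R < t \<Longrightarrow> 0 < rhs V t"
  by (simp add: rhs_def nonlin_pos less_max_iff_disj barrier_pos)

lemma continuous_on_rhs: "continuous_on {R<..} (rhs V)"
proof -
  have "\<forall>t\<in>{R<..}. 0 < max (profile V t) (barrier t)"
    by (simp add: less_max_iff_disj barrier_pos)
  then have "\<forall>t\<in>{R<..}. max (profile V t) (barrier t) \<noteq> 0"
    by (metis less_irrefl)
  then show ?thesis
    unfolding rhs_def[abs_def] nonlin_def
    by (intro continuous_intros continuous_on_profile continuous_on_barrier) auto
qed

lemma rhs_le: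
  assumes "R < t"
  shows "rhs V t \<le> \<beta> / 2 * (\<rho> t * norm V + c1 * \<delta> powr \<beta>)
                   + \<gamma> * (c1 powr (\<gamma> - 1) * ((t - R) powr (\<beta> - 2) + \<delta> powr (\<beta> - 2)))"
proof -
  define X where "X = max (profile V t) (barrier t)"
  have barrier_le_X: "barrier t \<le> X"
    by (simp add: X_def)
  have "X \<le> \<rho> t * norm V + c1 * \<delta> powr \<beta>"
    using abs_profile_le[OF assms, of V] barrier_le[OF assms] barrier_pos[OF assms]
      \<rho>_pos[OF assms] norm_ge_zero[of V] unfolding X_def by (auto simp: abs_le_iff)
  moreover have "X powr (\<gamma> - 1) \<le> c1 powr (\<gamma> - 1) * ((t - R) powr (\<beta> - 2) + \<delta> powr (\<beta> - 2))"
  proof -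
    have "X powr (\<gamma> - 1) \<le> barrier t powr (\<gamma> - 1)"
      using barrier_le_X barrier_pos[OF assms] \<gamma>_lt_1 by (intro powr_mono2') auto
    also have "\<dots> = c1 powr (\<gamma> - 1) * min (t - R) \<delta> powr (\<beta> - 2)"
      by (rule barrier_powr_\<gamma>_minus_1[OF assms])
    also have "\<dots> \<le> c1 powr (\<gamma> - 1) * ((t - R) powr (\<beta> - 2) + \<delta> powr (\<beta> - 2))"
      by (intro mult_left_mono) (auto simp: min_def)
    finally show ?thesis .
  qed
  ultimately show ?thesis
    unfolding rhs_def nonlin_def X_def[symmetric] using \<beta>_gt_1 \<gamma>_pos
    by (intro add_mono mult_left_mono) auto
qed

lemma dominated_rhs: obtains a b where "dominated (rhs V) a b"
proof -
  define C where "C = \<gamma> * c1 powr (\<gamma> - 1)"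
  define K where "K = \<beta> / 2 * c1 * \<delta> powr \<beta> + C * \<delta> powr (\<beta> - 2)"
  have "0 \<le> C" "0 \<le> K"
    using \<gamma>_pos \<beta>_gt_1 c1_pos by (auto simp: C_def K_def)
  have "rhs V t \<le> ((C + K) / (t - R)^2 + (\<beta> / 2 * norm V + K)) * \<rho> t" if "R < t" for t
  proof -
    have "rhs V t \<le> \<beta> / 2 * norm V * \<rho> t + K + C * (t - R) powr (\<beta> - 2)"
      using rhs_le[OF that, of V] by (simp add: C_def K_def algebra_simps)
    also have "\<dots> \<le> \<beta> / 2 * norm V * \<rho> t + K * ((1 / (t - R)^2 + 1) * \<rho> t) + C * (\<rho> t / (t - R)^2)"
      using mult_left_mono[OF one_le_\<rho>[OF that] \<open>0 \<le> K\<close>]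
        mult_left_mono[OF powr_\<beta>_minus_2_le_\<rho>[OF that] \<open>0 \<le> C\<close>]
      by (intro add_mono) auto
    also have "\<dots> = ((C + K) / (t - R)^2 + (\<beta> / 2 * norm V + K)) * \<rho> t"
      by (simp add: algebra_simps add_divide_distrib)
    finally show ?thesis .
  qed
  then have "dominated (rhs V) (C + K) (\<beta> / 2 * norm V + K)"
    unfolding dominated_def using continuous_on_rhs rhs_pos \<open>0 \<le> C\<close> \<open>0 \<le> K\<close> \<beta>_gt_1
    by (auto simp: less_imp_le)
  then show ?thesis
    by (rule that)
qed

lemma abs_rhs_diff_le:
  assumes "R < t"
  shows "\<bar>rhs V t - rhs W t\<bar> \<le> (lip / (t - R)^2 + (\<beta> / 2 + lip / \<delta>^2)) * (\<rho> t * dist V W)"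
proof -
  define X Y where "X = max (profile V t) (barrier t)" and "Y = max (profile W t) (barrier t)"
  have "\<bar>rhs V t - rhs W t\<bar> \<le> (\<beta> / 2 + \<gamma> * (1 - \<gamma>) * barrier t powr (\<gamma> - 2)) * \<bar>X - Y\<bar>"
    unfolding rhs_def X_def[symmetric] Y_def[symmetric]
    by (rule nonlin_lipschitz) (auto simp: X_def Y_def barrier_pos[OF assms])
  also have "\<dots> \<le> (lip / (t - R)^2 + (\<beta> / 2 + lip / \<delta>^2)) * (\<rho> t * dist V W)"
  proof (rule mult_mono)
    have "\<gamma> * (1 - \<gamma>) * barrier t powr (\<gamma> - 2) = lip * (1 / (min (t - R) \<delta>)^2)"
      by (simp add: barrier_powr_\<gamma>_minus_2[OF assms] lip_def)
    also have "\<dots> \<le> lip * (1 / (t - R)^2 + 1 / \<delta>^2)"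
      using assms lip_pos by (intro mult_left_mono) (auto simp: min_def)
    finally show "\<beta> / 2 + \<gamma> * (1 - \<gamma>) * barrier t powr (\<gamma> - 2) \<le> lip / (t - R)^2 + (\<beta> / 2 + lip / \<delta>^2)"
      by (simp add: algebra_simps)
    show "\<bar>X - Y\<bar> \<le> \<rho> t * dist V W"
      using abs_profile_diff_le[OF assms, of V W] unfolding X_def Y_def by (auto simp: max_def)
  qed (use lip_pos \<beta>_gt_1 in auto)
  finally show ?thesis .
qed

lemma dominated_rhs_diff:
  "dominated (\<lambda>t. rhs V t - rhs W t) (lip * dist V W) ((\<beta> / 2 + lip / \<delta>^2) * dist V W)"
  unfolding dominated_def using abs_rhs_diff_le lip_pos \<beta>_gt_1
  by (auto intro!: continuous_intros continuous_on_rhs simp: algebra_simps)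

lemma T_bcontfun: "(\<lambda>x. sol (rhs V) (R + exp x) / \<rho> (R + exp x)) \<in> bcontfun"
proof -
  obtain a b where dom: "dominated (rhs V) a b"
    by (rule dominated_rhs)
  have "continuous_on {R<..} (\<lambda>r. sol (rhs V) r / \<rho> r)"
    using \<rho>_pos by (intro continuous_intros continuous_on_sol[OF dom] continuous_on_\<rho>) force
  then have "continuous_on UNIV (\<lambda>x. sol (rhs V) (R + exp x) / \<rho> (R + exp x))"
    by (rule continuous_on_compose2[where f = "\<lambda>x. R + exp x"]) (auto intro!: continuous_intros)
  moreover have "norm (sol (rhs V) (R + exp x) / \<rho> (R + exp x)) \<le> a / (\<beta> * (\<beta> - 1)) + b / k^2"
    for x
    using abs_sol_le[OF dom, of "R + exp x"] \<rho>_pos[of "R + exp x"] by (simp add: divide_le_eq)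
  ultimately show ?thesis
    by (rule bcontfun_normI)
qed

lemma T_apply: "apply_bcontfun (T V) x = sol (rhs V) (R + exp x) / \<rho> (R + exp x)"
  unfolding T_def by (simp add: Bcontfun_inverse[OF T_bcontfun])

lemma dist_T_le: "dist (T V) (T W) \<le> \<theta> * dist V W"
proof (rule dist_bound)
  fix x :: real
  define r where "r = R + exp x"
  have "R < r"
    by (simp add: r_def)
  obtain a b a' b' where "dominated (rhs V) a b" "dominated (rhs W) a' b'"
    by (metis dominated_rhs)
  then have "sol (\<lambda>t. rhs V t - rhs W t) r = sol (rhs V) r - sol (rhs W) r"
    using \<open>R < r\<close> by (intro sol_diff) auto
  moreover have "\<bar>sol (\<lambda>t. rhs V t - rhs W t) r\<bar> \<le> \<theta> * dist V W * \<rho> r"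
    using abs_sol_le[OF dominated_rhs_diff, of r] \<open>R < r\<close>
    by (simp add: \<theta>_def algebra_simps)
  ultimately show "dist (apply_bcontfun (T V) x) (apply_bcontfun (T W) x) \<le> \<theta> * dist V W"
    using \<rho>_pos[OF \<open>R < r\<close>]
    by (simp add: T_apply dist_real_def divide_le_eq r_def[symmetric] flip: diff_divide_distrib)
qed

end

section \<open>Barriers for the fixed point\<close>

locale profile_params = profile_data +
  assumes c1_le_c2: "c1 \<le> c2"
    and c1_le_lower: "c1 \<le> w R / w (R + \<delta>) * E * c2 powr (\<gamma> - 1)"
    and \<theta>_lt_1: "\<theta> < 1"
begin

lemma T_has_fixed_point: "\<exists>V. T V = V"
proof -
  have "0 \<le> \<theta>"
    unfolding \<theta>_def using lip_pos \<beta>_gt_1 by auto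
  then show ?thesis
    using banach_fix_type[OF _ \<theta>_lt_1, of T] dist_T_le by blast
qed

context
  fixes V assumes fixed: "T V = V"
begin

abbreviation U :: "real \<Rightarrow> real" where
  "U \<equiv> sol (rhs V)"

lemma profile_fixed_point:
  assumes "R < t"
  shows "profile V t = U t"
proof -
  have "apply_bcontfun V (ln (t - R)) = U t / \<rho> t"
    using T_apply[of V "ln (t - R)"] assms by (simp add: fixed)
  then show ?thesis
    using \<rho>_pos[OF assms] by (simp add: profile_def)
qed

lemma rhs_fixed_point: "R < t \<Longrightarrow> rhs V t = nonlin (max (U t) (barrier t))"
  by (simp add: rhs_def profile_fixed_point)

lemma flux_rhs_nonneg:
  assumes "R \<le> s"
  shows "0 \<le> flux (rhs V) s"
proof -
  obtain a b where "dominated (rhs V) a b"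
    by (rule dominated_rhs)
  then have "w R * 0 \<le> flux (rhs V) s"
    using assms rhs_pos
    by (intro flux_ge_integral[OF _ has_integral_0] flux_integrable_and_bound(1)) (auto simp: less_imp_le)
  then show ?thesis
    by simp
qed

lemma U_mono:
  assumes "R < t" "t \<le> r"
  shows "U t \<le> U r"
proof (rule DERIV_nonneg_imp_increasing_open[OF \<open>t \<le> r\<close>])
  obtain a b where dom: "dominated (rhs V) a b"
    by (rule dominated_rhs)
  show "continuous_on {t..r} U"
    using assms by (intro continuous_on_subset[OF continuous_on_sol[OF dom]]) auto
  fix x assume "t < x" "x < r"
  then have "(U has_real_derivative flux (rhs V) x / w x) (at x)" "0 \<le> flux (rhs V) x / w x"
    using assms has_real_derivative_sol[OF dom] flux_rhs_nonneg[of x] w_pos[of x] by auto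
  then show "\<exists>y. (U has_real_derivative y) (at x) \<and> 0 \<le> y"
    by blast
qed

lemma rhs_le_near:
  assumes "R < t" "t \<le> r" "r - R \<le> \<delta>"
  shows "rhs V t \<le> \<beta> / 2 * max (U r) (barrier r) + \<gamma> * c1 powr (\<gamma> - 1) * (t - R) powr (\<beta> - 2)"
proof -
  define Y where "Y = max (U t) (barrier t)"
  have "barrier t \<le> Y" "Y \<le> max (U r) (barrier r)"
    using U_mono[OF assms(1,2)] barrier_mono[OF assms(1,2)] by (auto simp: Y_def)
  moreover have "Y powr (\<gamma> - 1) \<le> c1 powr (\<gamma> - 1) * (t - R) powr (\<beta> - 2)"
  proof -
    have "Y powr (\<gamma> - 1) \<le> barrier t powr (\<gamma> - 1)"
      using \<open>barrier t \<le> Y\<close> barrier_pos[OF assms(1)] \<gamma>_lt_1 by (intro powr_mono2') auto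
    also have "\<dots> = c1 powr (\<gamma> - 1) * (t - R) powr (\<beta> - 2)"
      using barrier_powr_\<gamma>_minus_1[OF assms(1)] assms by (simp add: min_def)
    finally show ?thesis .
  qed
  ultimately show ?thesis
    unfolding rhs_fixed_point[OF assms(1)] nonlin_def Y_def[symmetric] using \<beta>_gt_1 \<gamma>_pos
    by (intro add_mono) (auto simp: mult.assoc)
qed

lemma U_le_upper_barrier:
  assumes "R < r" "r - R \<le> \<delta>"
  shows "U r \<le> c2 * (r - R) powr \<beta>"
proof -
  define X where "X = max (U r) (barrier r)"
  obtain a b where dom: "dominated (rhs V) a b"
    by (rule dominated_rhs)
  have "U r \<le> \<beta> / 2 * X * (r - R)^2 / 2 + \<gamma> * c1 powr (\<gamma> - 1) * (r - R) powr \<beta> / (\<beta> * (\<beta> - 1))"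
  proof (rule sol_le_of_source_le[OF dom])
    fix t assume "R < t" "t \<le> r"
    then show "\<bar>rhs V t\<bar> \<le> \<beta> / 2 * X + \<gamma> * c1 powr (\<gamma> - 1) * (t - R) powr (\<beta> - 2)"
      using rhs_le_near[OF _ _ assms(2)] rhs_pos[of t V] unfolding X_def by simp
  qed (use assms in simp)
  then have U_le: "U r \<le> \<beta> / 4 * X * (r - R)^2 + E * c1 powr (\<gamma> - 1) * (r - R) powr \<beta>"
    by (simp add: E_def)
  show ?thesis
  proof (cases "U r \<le> barrier r")
    case True
    have "c1 * (r - R) powr \<beta> \<le> c2 * (r - R) powr \<beta>"
      by (rule mult_right_mono[OF c1_le_c2]) simp
    then show ?thesis
      using True barrier_near[OF assms(2)] by linarith
  next
    case False
    \<comment> \<open>now \<open>U r\<close> occurs on both sides of \<open>U_le\<close>; \<open>D > 0\<close> absorbs it\<close>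
    then have "X = U r" "0 < U r"
      using barrier_pos[OF assms(1)] by (auto simp: X_def)
    have "(r - R)^2 \<le> \<delta>^2"
      using assms by (intro power_mono) auto
    then have "U r * D \<le> U r * (1 - \<beta> / 4 * (r - R)^2)"
      using \<open>0 < U r\<close> \<beta>_gt_1 by (intro mult_left_mono) (auto simp: D_def)
    also have "\<dots> \<le> E * c1 powr (\<gamma> - 1) * (r - R) powr \<beta>"
      using U_le \<open>X = U r\<close> by (simp add: algebra_simps)
    finally show ?thesis
      using D_pos by (simp add: c2_def le_divide_eq mult.commute)
  qed
qed

lemma rhs_ge_near:
  assumes "R < t" "t - R \<le> \<delta>"
  shows "\<gamma> * c2 powr (\<gamma> - 1) * (t - R) powr (\<beta> - 2) \<le> rhs V t"
proof -
  define Y where "Y = max (U t) (barrier t)"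
  have "0 < Y"
    using barrier_pos[OF assms(1)] by (simp add: Y_def less_max_iff_disj)
  have "Y \<le> c2 * (t - R) powr \<beta>"
    using U_le_upper_barrier[OF assms] barrier_near[OF assms(2)] c1_le_c2
    by (auto simp: Y_def intro: mult_right_mono)
  then have "(c2 * (t - R) powr \<beta>) powr (\<gamma> - 1) \<le> Y powr (\<gamma> - 1)"
    using \<open>0 < Y\<close> \<gamma>_lt_1 by (intro powr_mono2') auto
  moreover have "(c2 * (t - R) powr \<beta>) powr (\<gamma> - 1) = c2 powr (\<gamma> - 1) * (t - R) powr (\<beta> - 2)"
    using c2_pos assms by (simp add: powr_mult powr_powr \<beta>_\<gamma>_minus_1)
  ultimately show ?thesis
    unfolding rhs_fixed_point[OF assms(1)] nonlin_def Y_def[symmetric]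
    using \<open>0 < Y\<close> \<beta>_gt_1 \<gamma>_pos by (simp add: mult.assoc add_increasing)
qed

lemma barrier_le_U_near:
  assumes "R < r" "r - R \<le> \<delta>"
  shows "barrier r \<le> U r"
proof -
  obtain a b where dom: "dominated (rhs V) a b"
    by (rule dominated_rhs)
  have "barrier r \<le> w R / w (R + \<delta>) * E * c2 powr (\<gamma> - 1) * (r - R) powr \<beta>"
    using barrier_near[OF assms(2)] mult_right_mono[OF c1_le_lower, of "(r - R) powr \<beta>"] by simp
  also have "\<dots> \<le> w R / w r * (\<gamma> * c2 powr (\<gamma> - 1) * (r - R) powr \<beta> / (\<beta> * (\<beta> - 1)))"
  proof -
    have "w R / w (R + \<delta>) \<le> w R / w r"
      using assms w_pos w_mono[of r "R + \<delta>"] by (intro divide_left_mono) (auto intro: less_imp_le)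
    moreover have "0 \<le> E * c2 powr (\<gamma> - 1) * (r - R) powr \<beta>"
      using E_pos by simp
    ultimately have "w R / w (R + \<delta>) * (E * c2 powr (\<gamma> - 1) * (r - R) powr \<beta>)
        \<le> w R / w r * (E * c2 powr (\<gamma> - 1) * (r - R) powr \<beta>)"
      by (rule mult_right_mono)
    then show ?thesis
      by (simp add: E_def mult_ac)
  qed
  also have "\<dots> \<le> U r"
    using assms rhs_ge_near c2_pos \<gamma>_pos by (intro sol_ge_of_source_ge[OF dom]) auto
  finally show ?thesis .
qed

lemma barrier_le_U:
  assumes "R < r"
  shows "barrier r \<le> U r"
proof (cases "r - R \<le> \<delta>")
  case False
  have "barrier r = barrier (R + \<delta>)"
    using False by (simp add: barrier_far)
  also have "\<dots> \<le> U (R + \<delta>)"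
    using barrier_le_U_near[of "R + \<delta>"] \<delta>_pos by auto
  also have "\<dots> \<le> U r"
    using U_mono[of "R + \<delta>" r] False \<delta>_pos by auto
  finally show ?thesis .
qed (rule barrier_le_U_near[OF assms])

lemma U_pos: "R < r \<Longrightarrow> 0 < U r"
  using barrier_le_U[of r] barrier_pos[of r] by linarith

lemma rhs_eq_nonlin_U: "R < t \<Longrightarrow> rhs V t = nonlin (U t)"
  using barrier_le_U[of t] by (simp add: rhs_fixed_point max_absorb1)

lemma deriv_U: "R < r \<Longrightarrow> deriv U r = flux (rhs V) r / w r"
  by (metis DERIV_imp_deriv dominated_rhs has_real_derivative_sol)

lemma has_real_derivative_deriv_U:
  assumes "R < r"
  shows "(deriv U has_real_derivative rhs V r - ((real n - 1) / r + r / 2) * deriv U r) (at r)"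
proof -
  obtain a b where dom: "dominated (rhs V) a b"
    by (rule dominated_rhs)
  have "0 < w r" "0 < r"
    using assms R_pos w_pos[of r] by auto
  have "((\<lambda>s. flux (rhs V) s / w s) has_real_derivative
          (w r * rhs V r * w r - flux (rhs V) r * (w r * ((real n - 1) / r + r / 2))) / (w r * w r)) (at r)"
    using assms \<open>0 < w r\<close> \<open>0 < r\<close> n_ge_1
    by (intro DERIV_divide has_real_derivative_flux[OF dom] has_real_derivative_gauss_weight) auto
  moreover have "(w r * rhs V r * w r - flux (rhs V) r * (w r * ((real n - 1) / r + r / 2))) / (w r * w r)
      = rhs V r - ((real n - 1) / r + r / 2) * deriv U r"
    using assms \<open>0 < w r\<close> by (simp add: deriv_U field_simps)
  ultimately have "((\<lambda>s. flux (rhs V) s / w s) has_real_derivative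
          rhs V r - ((real n - 1) / r + r / 2) * deriv U r) (at r)"
    by simp
  then show ?thesis
    by (rule has_field_derivative_transform_within_open[where S = "{R<..}"]) (use assms deriv_U in auto)
qed

lemma deriv2_U: "R < r \<Longrightarrow> deriv (deriv U) r = rhs V r - ((real n - 1) / r + r / 2) * deriv U r"
  by (rule DERIV_imp_deriv[OF has_real_derivative_deriv_U])

lemma continuous_on_deriv2_U: "continuous_on {R<..} (deriv (deriv U))"
proof -
  obtain a b where dom: "dominated (rhs V) a b"
    by (rule dominated_rhs)
  have "continuous_on {R<..} (flux (rhs V))"
    by (rule continuous_at_imp_continuous_on)
      (auto intro: DERIV_isCont has_real_derivative_flux[OF dom])
  moreover have "\<forall>r\<in>{R<..}. w r \<noteq> 0 \<and> r \<noteq> 0"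
    using w_pos R_pos by (auto simp: less_imp_neq[symmetric])
  ultimately have "continuous_on {R<..}
      (\<lambda>r. rhs V r - ((real n - 1) / r + r / 2) * (flux (rhs V) r / w r))"
    by (intro continuous_intros continuous_on_rhs continuous_on_subset[OF w_cont]) auto
  then show ?thesis
    by (rule continuous_on_eq) (simp add: deriv2_U deriv_U)
qed

lemma tendsto_U: "(U \<longlongrightarrow> 0) (at_right R)"
proof -
  obtain a b where dom: "dominated (rhs V) a b"
    by (rule dominated_rhs)
  show ?thesis
  proof (rule Lim_null_comparison)
    show "\<forall>\<^sub>F r in at_right R. norm (U r) \<le> (a / (\<beta> * (\<beta> - 1)) + b / k^2) * \<rho> r"
      using eventually_at_right_less[of R] by eventually_elim (simp add: abs_sol_le[OF dom])
    show "((\<lambda>r. (a / (\<beta> * (\<beta> - 1)) + b / k^2) * \<rho> r) \<longlongrightarrow> 0) (at_right R)"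
      using tendsto_mult[OF tendsto_const tendsto_\<rho>] by simp
  qed
qed

lemma tendsto_deriv_U: "(deriv U \<longlongrightarrow> 0) (at_right R)"
proof -
  obtain a b where dom: "dominated (rhs V) a b"
    by (rule dominated_rhs)
  show ?thesis
  proof (rule Lim_null_comparison[OF _ tendsto_flux_bound])
    show "\<forall>\<^sub>F r in at_right R. norm (deriv U r) \<le> flux_bound a b r"
      using eventually_at_right_less[of R]
    proof eventually_elim
      case (elim r)
      then show ?case
        using flux_integrable_and_bound(2)[OF dom, of r] w_pos[of r]
        by (simp add: deriv_U abs_divide divide_le_eq mult.commute)
    qed
  qed
qed

lemma U_solves:
  "(\<forall>r\<in>{R<..}. U differentiable (at r) \<and> deriv U differentiable (at r)) \<and>
   continuous_on {R<..} (deriv (deriv U)) \<and>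
   (\<forall>r\<in>{R<..}. U r > 0) \<and>
   (U \<longlongrightarrow> 0) (at_right R) \<and>
   (deriv U \<longlongrightarrow> 0) (at_right R) \<and>
   (\<forall>r\<in>{R<..}. deriv (deriv U) r + ((real n - 1) / r + r / 2) * deriv U r
                   - \<beta> / 2 * U r = \<gamma> * U r powr (\<gamma> - 1))"
proof (intro conjI ballI continuous_on_deriv2_U tendsto_U tendsto_deriv_U)
  fix r assume "r \<in> {R<..}"
  then have "R < r"
    by simp
  obtain a b where dom: "dominated (rhs V) a b"
    by (rule dominated_rhs)
  show "U differentiable (at r)" "deriv U differentiable (at r)"
    using has_real_derivative_sol[OF dom \<open>R < r\<close>] has_real_derivative_deriv_U[OF \<open>R < r\<close>]
    by (auto simp: real_differentiable_def)
  show "U r > 0"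
    by (rule U_pos[OF \<open>R < r\<close>])
  show "deriv (deriv U) r + ((real n - 1) / r + r / 2) * deriv U r - \<beta> / 2 * U r = \<gamma> * U r powr (\<gamma> - 1)"
    by (simp add: deriv2_U[OF \<open>R < r\<close>] rhs_eq_nonlin_U[OF \<open>R < r\<close>] nonlin_def)
qed

end

end

section \<open>Choice of the constants\<close>

text \<open>In the coordinate \<open>ln c\<close> all three conditions are linear; the choice below makes the
  second one an equality.\<close>

lemma barrier_constant_exists:
  fixes \<gamma> \<omega> D E :: real
  assumes \<gamma>: "0 < \<gamma>" "\<gamma> < 1" and \<omega>: "0 < \<omega>" "\<omega> \<le> 1" and D: "0 < D" "D \<le> 1" and "0 < E"
    and small: "\<gamma> * ln (1 - \<gamma>) < ln \<omega> + (1 - \<gamma>) * ln D"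
  obtains c where "0 < c" "c \<le> E * c powr (\<gamma> - 1) / D"
    "c \<le> \<omega> * E * (E * c powr (\<gamma> - 1) / D) powr (\<gamma> - 1)" "(1 - \<gamma>) * E * c powr (\<gamma> - 2) < 1"
proof -
  define S where "S = ln \<omega> + \<gamma> * ln E + (1 - \<gamma>) * ln D"
  define x where "x = S / (\<gamma> * (2 - \<gamma>))"
  have x: "\<gamma> * ((2 - \<gamma>) * x) = S"
    using \<gamma> by (simp add: x_def)
  have "ln \<omega> \<le> 0" "ln D \<le> 0"
    using \<omega> D by auto
  have exp_powr: "exp y powr a = exp (a * y)" for y a :: real
    by (simp add: powr_def)
  have c2: "E * exp x powr (\<gamma> - 1) / D = exp (ln E + (\<gamma> - 1) * x - ln D)"
    using \<open>0 < E\<close> D by (simp add: exp_powr exp_add exp_diff)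
  show ?thesis
  proof (rule that[of "exp x"])
    show "0 < exp x"
      by simp
    have "\<gamma> * ((2 - \<gamma>) * x) \<le> \<gamma> * (ln E - ln D)"
      using x \<open>ln \<omega> \<le> 0\<close> \<open>ln D \<le> 0\<close> by (simp add: S_def algebra_simps)
    then have "(2 - \<gamma>) * x \<le> ln E - ln D"
      using \<gamma> by (simp add: mult_le_cancel_left_pos)
    then have "x \<le> ln E + (\<gamma> - 1) * x - ln D"
      by (simp add: algebra_simps)
    then show "exp x \<le> E * exp x powr (\<gamma> - 1) / D"
      by (simp add: c2)
    have "\<omega> * E * (E * exp x powr (\<gamma> - 1) / D) powr (\<gamma> - 1)
        = exp (ln \<omega> + ln E + (\<gamma> - 1) * (ln E + (\<gamma> - 1) * x - ln D))"
      unfolding c2 using \<omega> \<open>0 < E\<close> by (simp add: exp_powr exp_add)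
    also have "ln \<omega> + ln E + (\<gamma> - 1) * (ln E + (\<gamma> - 1) * x - ln D) = x + S - \<gamma> * ((2 - \<gamma>) * x)"
      by (simp add: S_def algebra_simps)
    finally show "exp x \<le> \<omega> * E * (E * exp x powr (\<gamma> - 1) / D) powr (\<gamma> - 1)"
      using x by simp
    have "\<gamma> * (ln (1 - \<gamma>) + ln E + (\<gamma> - 2) * x) = \<gamma> * ln (1 - \<gamma>) - ln \<omega> - (1 - \<gamma>) * ln D"
      using x by (simp add: S_def algebra_simps)
    then have "\<gamma> * (ln (1 - \<gamma>) + ln E + (\<gamma> - 2) * x) < 0"
      using small by simp
    then have "ln (1 - \<gamma>) + ln E + (\<gamma> - 2) * x < 0"
      using \<gamma> by (simp add: mult_less_0_iff)
    then have "exp (ln (1 - \<gamma>) + ln E + (\<gamma> - 2) * x) < 1"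
      by simp
    then show "(1 - \<gamma>) * E * exp x powr (\<gamma> - 2) < 1"
      using \<gamma> \<open>0 < E\<close> by (simp add: exp_powr exp_add)
  qed
qed

lemma exists_small_delta:
  fixes \<gamma> \<beta> R :: real
  assumes "0 < \<gamma>" "\<gamma> < 1" "0 < R"
  obtains \<delta> where "0 < \<delta>" "\<beta> * \<delta>^2 / 4 < 1"
    "\<gamma> * ln (1 - \<gamma>) < ln (gauss_weight n R / gauss_weight n (R + \<delta>)) + (1 - \<gamma>) * ln (1 - \<beta> * \<delta>^2 / 4)"
proof -
  have "((\<lambda>d. ln (gauss_weight n R / gauss_weight n (R + d)) + (1 - \<gamma>) * ln (1 - \<beta> * d^2 / 4))
      \<longlongrightarrow> ln (gauss_weight n R / gauss_weight n (R + 0)) + (1 - \<gamma>) * ln (1 - \<beta> * 0^2 / 4)) (at_right 0)"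
    unfolding gauss_weight_def using assms by (intro tendsto_intros) auto
  moreover have "\<gamma> * ln (1 - \<gamma>) < 0"
    using assms by (simp add: mult_pos_neg)
  ultimately have "\<forall>\<^sub>F d in at_right 0.
      \<gamma> * ln (1 - \<gamma>) < ln (gauss_weight n R / gauss_weight n (R + d)) + (1 - \<gamma>) * ln (1 - \<beta> * d^2 / 4)"
    using assms gauss_weight_pos[of R n] by (intro order_tendstoD(1)) auto
  moreover have "((\<lambda>d::real. \<beta> * d^2 / 4) \<longlongrightarrow> \<beta> * 0^2 / 4) (at_right 0)"
    by (intro tendsto_intros) auto
  then have "\<forall>\<^sub>F d in at_right 0. \<beta> * d^2 / 4 < 1"
    by (rule order_tendstoD(2)) simp
  ultimately have "\<forall>\<^sub>F d in at_right 0. 0 < d \<and> \<beta> * d^2 / 4 < 1 \<and>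
      \<gamma> * ln (1 - \<gamma>) < ln (gauss_weight n R / gauss_weight n (R + d)) + (1 - \<gamma>) * ln (1 - \<beta> * d^2 / 4)"
    using eventually_at_right_less[of 0] by eventually_elim blast
  then show ?thesis
    using that eventually_happens'[OF trivial_limit_at_right_real] by blast
qed

lemma profile_params_exist:
  assumes "1 \<le> n" "0 < R" "0 < \<gamma>" "\<gamma> < 1" "\<beta> = 2 / (2 - \<gamma>)"
  shows "\<exists>k c1 \<delta>. profile_params n R \<gamma> \<beta> k c1 \<delta>"
proof -
  have "1 < \<beta>"
    using assms(3,4) by (simp add: assms(5) field_simps)
  obtain \<delta> where "0 < \<delta>" and \<delta>_small: "\<beta> * \<delta>^2 / 4 < 1" and
    \<delta>_log: "\<gamma> * ln (1 - \<gamma>) < ln (gauss_weight n R / gauss_weight n (R + \<delta>)) + (1 - \<gamma>) * ln (1 - \<beta> * \<delta>^2 / 4)"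
    using exists_small_delta assms(2-4) by blast
  define E where "E = \<gamma> / (\<beta> * (\<beta> - 1))"
  have "0 < gauss_weight n R / gauss_weight n (R + \<delta>)" "gauss_weight n R / gauss_weight n (R + \<delta>) \<le> 1"
    using gauss_weight_pos gauss_weight_mono[of R "R + \<delta>"] assms(2) \<open>0 < \<delta>\<close> by auto
  moreover have "0 < 1 - \<beta> * \<delta>^2 / 4" "1 - \<beta> * \<delta>^2 / 4 \<le> 1"
    using \<delta>_small \<open>1 < \<beta>\<close> by auto
  moreover have "0 < E"
    using assms(3) \<open>1 < \<beta>\<close> by (simp add: E_def)
  ultimately obtain c1 where "0 < c1" and c1:
    "c1 \<le> E * c1 powr (\<gamma> - 1) / (1 - \<beta> * \<delta>^2 / 4)"
    "c1 \<le> gauss_weight n R / gauss_weight n (R + \<delta>) * E * (E * c1 powr (\<gamma> - 1) / (1 - \<beta> * \<delta>^2 / 4)) powr (\<gamma> - 1)"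
    "(1 - \<gamma>) * E * c1 powr (\<gamma> - 2) < 1"
    using barrier_constant_exists[OF assms(3,4) _ _ _ _ _ \<delta>_log] by blast
  define \<theta>\<^sub>0 where "\<theta>\<^sub>0 = \<gamma> * (1 - \<gamma>) * c1 powr (\<gamma> - 2) / (\<beta> * (\<beta> - 1))"
  define B where "B = \<beta> / 2 + \<gamma> * (1 - \<gamma>) * c1 powr (\<gamma> - 2) / \<delta>^2"
  define k where "k = max 1 (2 * B / (1 - \<theta>\<^sub>0))"
  have "\<theta>\<^sub>0 < 1" "0 < B" "1 \<le> k"
    using c1(3) assms(3,4) \<open>1 < \<beta>\<close>
    by (auto simp: \<theta>\<^sub>0_def E_def B_def k_def mult_ac intro!: add_pos_nonneg)
  have "\<theta>\<^sub>0 + B / k^2 < 1"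
  proof -
    have "B / k^2 \<le> B / k"
      using \<open>1 \<le> k\<close> \<open>0 < B\<close> by (intro divide_left_mono) (auto simp: power2_eq_square)
    also have "\<dots> \<le> B / (2 * B / (1 - \<theta>\<^sub>0))"
      using \<open>0 < B\<close> \<open>\<theta>\<^sub>0 < 1\<close> \<open>1 \<le> k\<close> by (intro divide_left_mono) (auto simp: k_def)
    also have "\<dots> = (1 - \<theta>\<^sub>0) / 2"
      using \<open>0 < B\<close> \<open>\<theta>\<^sub>0 < 1\<close> by (simp add: field_simps)
    finally have "B / k^2 \<le> (1 - \<theta>\<^sub>0) / 2" .
    moreover have "(1 - \<theta>\<^sub>0) / 2 < 1 - \<theta>\<^sub>0"
      using \<open>\<theta>\<^sub>0 < 1\<close> by simp
    ultimately show ?thesis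
      by linarith
  qed
  have "profile_data n R \<gamma> \<beta> k c1 \<delta>"
    using assms \<open>1 \<le> k\<close> \<open>0 < c1\<close> \<open>0 < \<delta>\<close> \<delta>_small by unfold_locales auto
  then have "profile_params n R \<gamma> \<beta> k c1 \<delta>"
    using c1(1,2) \<open>\<theta>\<^sub>0 + B / k^2 < 1\<close>
    by (intro profile_params.intro profile_params_axioms.intro)
      (simp_all add: profile_data.c2_def profile_data.E_def profile_data.D_def profile_data.\<theta>_def
        profile_data.lip_def E_def \<theta>\<^sub>0_def B_def)
  then show ?thesis
    by blast
qed

theorem lemma6p6:
  fixes n :: nat and R \<gamma> \<beta> :: real
  assumes "n \<ge> 1" and "R > 0" and "0 < \<gamma>" and "\<gamma> < 1"
    and "\<beta> = 2 / (2 - \<gamma>)"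
  shows "\<exists>U :: real \<Rightarrow> real.
     (\<forall>r\<in>{R<..}. U differentiable (at r) \<and> deriv U differentiable (at r)) \<and>
     continuous_on {R<..} (deriv (deriv U)) \<and>
     (\<forall>r\<in>{R<..}. U r > 0) \<and>
     (U \<longlongrightarrow> 0) (at_right R) \<and>
     (deriv U \<longlongrightarrow> 0) (at_right R) \<and>
     (\<forall>r\<in>{R<..}. deriv (deriv U) r + ((real n - 1) / r + r / 2) * deriv U r
                     - \<beta> / 2 * U r = \<gamma> * U r powr (\<gamma> - 1))"
proof -
  obtain k c1 \<delta> where "profile_params n R \<gamma> \<beta> k c1 \<delta>"
    using profile_params_exist[OF assms] by blast
  then interpret profile_params n R \<gamma> \<beta> k c1 \<delta> .
  obtain V where "T V = V"
    using T_has_fixed_point by blast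
  then show ?thesis
    using U_solves by blast
qed

end
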